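(* Let $\Phi:\mathcal{S}(\mathbb{C}^2)\to\mathcal{S}(\mathbb{C}^2)$ be a map. The following are equivalent: (1) $D_z(\Phi(\rho),\Phi(\omega))=D_z(\rho,\omega)$ for all $\rho,\omega\in\mathcal{S}(\mathbb{C}^2)$; (2) $|\mathbf{b}_{\Phi(\rho)}|=|\mathbf{b}_\rho|$ for all $\rho\in\mathcal{S}(\mathbb{C}^2)$, and either $(\mathbf{b}_{\Phi(\rho)})_3=(\mathbf{b}_\rho)_3$ for all $\rho\in\mathcal{S}(\mathbb{C}^2)$, or $(\mathbf{b}_{\Phi(\rho)})_3=-(\mathbf{b}_\rho)_3$ for all $\rho\in\mathcal{S}(\mathbb{C}^2)$.
   Context: Let $\mathcal{H}=\mathbb{C}^2$, $\mathcal{H}^*$ its dual space, and $\mathcal{S}(\mathcal{H})$ the set of density operators (positive semidefinite, trace one) on $\mathcal{H}$. For a linear operator $A$ on $\mathcal{H}$, its transpose $A^T$ is the operator on $\mathcal{H}^*$ defined by $(A^T\varphi)(x)=\varphi(Ax)$. For $\rho,\omega\in\mathcal{S}(\mathcal{H})$, the set of quantum couplings is $\mathcal{C}(\rho,\omega)=\{\Pi\in\mathcal{S}(\mathcal{H}\otimes\mathcal{H}^* ):\ \mathrm{tr}_{\mathcal{H}^*}[\Pi]=\omega,\ \mathrm{tr}_{\mathcal{H}}[\Pi]=\rho^T\}$. The Pauli matrices are $\sigma_1=\begin{bmatrix}0&1\\1&0\end{bmatrix}$, $\sigma_2=\begin{bmatrix}0&-i\\i&0\end{bmatrix}$, $\sigma_3=\sigma_z=\begin{bmatrix}1&0\\0&-1\end{bmatrix}$.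 The cost operator is $C_z=(\sigma_z\otimes I^T-I\otimes\sigma_z^T)^2$ and the quantum Wasserstein distance $D_z$ is defined by $D_z^2(\rho,\omega)=\inf\{\mathrm{tr}_{\mathcal{H}\otimes\mathcal{H}^*}[\Pi C_z]:\Pi\in\mathcal{C}(\rho,\omega)\}$. The Bloch vector of $\rho$ is $\mathbf{b}_\rho=(\mathrm{tr}[\sigma_j\rho])_{j=1}^3\in\mathbb{R}^3$, $|\cdot|$ the Euclidean norm, and $(\mathbf{b}_\rho)_3$ its third coordinate. *)

theory Defs
  imports "HOL-Analysis.Analysis"
begin

text \<open>H^* is identified with C^2 via the dual basis, so that the transpose A^T
  of an operator is the ordinary matrix transpose. Operators on the
  4-dimensional space H (x) H^* are matrices indexed by the product type 2 x 2,
  the first component indexing H and the second H^*.\<close>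

type_synonym op2 = "complex^2^2"
type_synonym op4 = "complex^(2 \<times> 2)^(2 \<times> 2)"

definition psd :: "complex^'n^'n \<Rightarrow> bool" where
  "psd A \<longleftrightarrow> (\<forall>x :: complex^'n.
     (let q = (\<Sum>i\<in>UNIV. \<Sum>j\<in>UNIV. cnj (x$i) * A$i$j * x$j) in Im q = 0 \<and> Re q \<ge> 0))"

definition is_state :: "complex^'n^'n \<Rightarrow> bool" where
  "is_state A \<longleftrightarrow> psd A \<and> trace A = 1"

definition kron :: "op2 \<Rightarrow> op2 \<Rightarrow> op4" where
  "kron A B = (\<chi> p q. A $ fst p $ fst q * B $ snd p $ snd q)"

definition ptrace2 :: "op4 \<Rightarrow> op2" where
  "ptrace2 P = (\<chi> i j. \<Sum>k\<in>UNIV. P $ (i,k) $ (j,k))"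

definition ptrace1 :: "op4 \<Rightarrow> op2" where
  "ptrace1 P = (\<chi> k l. \<Sum>i\<in>UNIV. P $ (i,k) $ (i,l))"

definition sigma1 :: op2 where "sigma1 = vector [vector [0, 1], vector [1, 0]]"
definition sigma2 :: op2 where "sigma2 = vector [vector [0, -\<i>], vector [\<i>, 0]]"
definition sigma3 :: op2 where "sigma3 = vector [vector [1, 0], vector [0, -1]]"

definition couplings :: "op2 \<Rightarrow> op2 \<Rightarrow> op4 set" where
  "couplings \<rho> \<omega> = {P. is_state P \<and> ptrace2 P = \<omega> \<and> ptrace1 P = transpose \<rho>}"

definition Cz :: op4 where
  "Cz = (let M = kron sigma3 (mat 1) - kron (mat 1) (transpose sigma3) in M ** M)"

definition Dz :: "op2 \<Rightarrow> op2 \<Rightarrow> real" where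
  "Dz \<rho> \<omega> = sqrt (Inf {Re (trace (P ** Cz)) | P. P \<in> couplings \<rho> \<omega>})"

definition bloch :: "op2 \<Rightarrow> real^3" where
  "bloch \<rho> = vector [Re (trace (sigma1 ** \<rho>)), Re (trace (sigma2 ** \<rho>)), Re (trace (sigma3 ** \<rho>))]"

end

theory Submission
  imports Defs
begin

text \<open>
  The cost operator is C_z = diag(0,4,4,0), so the cost of a coupling P only sees the two
  diagonal entries P_(12,12) and P_(21,21), and the marginal constraints make D_z explicit on
  the quantities in the theorem: writing c = rho_11 and w = rho_12, the squared distances from
  rho to the basis states |0><0| and |1><1| are 4(1 - c) and 4c, and
  D_z(rho,rho)^2 = 8|w|^2 / (1 + 2 sqrt(det rho)) with det rho = c(1 - c) - |w|^2, which for fixed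
  c is strictly increasing in |w|^2. The Bloch vector has third coordinate 2c - 1 and squared
  length 4|w|^2 + (2c - 1)^2.

  An isometry maps the basis states, the only pair of diagonal states at distance 2, to
  themselves or swaps them; the distances to |0><0| then show that c is preserved or replaced
  by 1 - c, and the self-distance shows that |w| is preserved. Conversely, conjugation by a
  diagonal unitary or by sigma_1 carries couplings to couplings of the same cost, and a map with
  the Bloch-vector property acts on every state as such a conjugation.
\<close>

section \<open>Positive semidefinite matrices\<close>

definition qform :: "complex^'n^'n \<Rightarrow> complex^'n \<Rightarrow> complex" where
  "qform A x = (\<Sum>i\<in>UNIV. \<Sum>j\<in>UNIV. cnj (x$i) * A$i$j * x$j)"

lemma psd_iff_qform: "psd A \<longleftrightarrow> (\<forall>x. Im (qform A x) = 0 \<and> Re (qform A x) \<ge> 0)"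
  unfolding psd_def qform_def Let_def by simp

lemma sum_UNIV_eq_single:
  fixes g :: "'n::finite \<Rightarrow> 'b::comm_monoid_add"
  assumes "\<And>k. k \<noteq> i \<Longrightarrow> g k = 0"
  shows "sum g UNIV = g i"
  using sum.mono_neutral_right[of UNIV "{i}" g] assms by auto

lemma sum_UNIV_eq_pair:
  fixes g :: "'n::finite \<Rightarrow> 'b::comm_monoid_add"
  assumes "i \<noteq> j" "\<And>k. k \<noteq> i \<Longrightarrow> k \<noteq> j \<Longrightarrow> g k = 0"
  shows "sum g UNIV = g i + g j"
  using sum.mono_neutral_right[of UNIV "{i,j}" g] assms by auto

lemma qform_single:
  "qform A (\<chi> k. if k = i then a else 0) = cnj a * A$i$i * a"
  unfolding qform_def by (simp add: sum_UNIV_eq_single[where i=i])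

lemma qform_pair:
  fixes A :: "complex^'n^'n"
  assumes "i \<noteq> j"
  shows "qform A (\<chi> k. if k = i then a else if k = j then b else 0) =
     cnj a * A$i$i * a + cnj a * A$i$j * b + cnj b * A$j$i * a + cnj b * A$j$j * b"
  unfolding qform_def using assms
  by (simp add: sum_UNIV_eq_pair[OF assms] algebra_simps)

lemma psd_diag:
  assumes "psd A" shows "Im (A$i$i) = 0" "Re (A$i$i) \<ge> 0"
  using assms qform_single[of A i 1] unfolding psd_iff_qform
  by (auto dest: spec[of _ "\<chi> k. if k = i then 1 else 0"])

lemma psd_hermitian:
  assumes "psd A" shows "A$j$i = cnj (A$i$j)"
proof (cases "i = j")
  case True
  then show ?thesis using psd_diag[OF assms, of i] by (simp add: complex_eq_iff)
next
  case False
  have "Im (qform A (\<chi> k. if k = i then 1 else if k = j then 1 else 0)) = 0"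
    "Im (qform A (\<chi> k. if k = i then 1 else if k = j then \<i> else 0)) = 0"
    using assms unfolding psd_iff_qform by blast+
  with psd_diag(1)[OF assms] show ?thesis unfolding qform_pair[OF False]
    by (simp add: complex_eq_iff algebra_simps)
qed

lemma nonneg_quadratic_bound:
  fixes a W d :: real
  assumes nonneg: "\<And>t. a * t^2 - 2*t*W + W*d \<ge> 0" and "W \<ge> 0" "a \<ge> 0" "d \<ge> 0"
  shows "W \<le> a * d"
proof (cases "a = 0")
  case True
  have "a * (d+1)^2 - 2*(d+1)*W + W*d \<ge> 0" by (rule nonneg)
  with True \<open>W \<ge> 0\<close> \<open>d \<ge> 0\<close> show ?thesis
    by (simp add: algebra_simps) (smt (verit) mult_nonneg_nonneg)
next
  case False
  with \<open>a \<ge> 0\<close> have "a > 0" by simp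
  have "a * (W/a)^2 - 2*(W/a)*W + W*d \<ge> 0" by (rule nonneg)
  with \<open>a > 0\<close> have "W * W \<le> W * (a*d)"
    by (simp add: power2_eq_square field_simps)
  then show ?thesis using \<open>W \<ge> 0\<close> \<open>a > 0\<close> \<open>d \<ge> 0\<close>
    by (cases "W = 0") (auto simp: mult_le_cancel_left)
qed

lemma psd_offdiag_bound:
  assumes "psd A" shows "(cmod (A$i$j))^2 \<le> Re (A$i$i) * Re (A$j$j)"
proof (cases "i = j")
  case True
  then show ?thesis using psd_diag[OF assms, of i] by (simp add: cmod_eq_Re power2_eq_square)
next
  case False
  define w where "w = A$i$j"
  have "Re (A$i$i) * t^2 - 2*t*(cmod w)^2 + (cmod w)^2 * Re (A$j$j) \<ge> 0" for t
  proof -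
    have "Re (qform A (\<chi> k. if k = i then of_real t else if k = j then - cnj w else 0)) \<ge> 0"
      using assms unfolding psd_iff_qform by blast
    moreover have "cmod w ^ 2 = Re w ^ 2 + Im w ^ 2" by (simp add: cmod_power2)
    ultimately show ?thesis
      unfolding qform_pair[OF False] psd_hermitian[OF assms, of j i] w_def[symmetric]
      using psd_diag(1)[OF assms] by (simp add: power2_eq_square algebra_simps)
  qed
  then have "(cmod w)^2 \<le> Re (A$i$i) * Re (A$j$j)"
    by (rule nonneg_quadratic_bound) (use psd_diag[OF assms] in auto)
  then show ?thesis by (simp add: w_def)
qed

lemma psd_rank_one:
  fixes \<phi> :: "'n::finite \<Rightarrow> complex"
  assumes "r \<ge> 0"
  shows "psd (\<chi> p q. of_real r * (\<phi> p * cnj (\<phi> q)))"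
  unfolding psd_iff_qform
proof
  fix x :: "complex^'n"
  define s where "s = (\<Sum>i\<in>UNIV. cnj (x$i) * \<phi> i)"
  have "qform (\<chi> p q. of_real r * (\<phi> p * cnj (\<phi> q))) x = of_real r * (s * cnj s)"
    unfolding qform_def s_def
    by (simp add: sum_product sum_distrib_left mult_ac) (subst sum.swap, simp add: mult_ac)
  also have "\<dots> = of_real (r * (cmod s)^2)" using complex_norm_square[of s] by simp
  finally show "Im (qform (\<chi> p q. of_real r * (\<phi> p * cnj (\<phi> q))) x) = 0 \<and>
      Re (qform (\<chi> p q. of_real r * (\<phi> p * cnj (\<phi> q))) x) \<ge> 0"
    using assms by simp
qed

lemma psd_transpose:
  assumes "psd A" shows "psd (transpose A)"
  unfolding psd_iff_qform
proof
  fix x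
  have "qform (transpose A) x = qform A (\<chi> i. cnj (x$i))"
    unfolding qform_def transpose_def
    by (subst sum.swap) (simp add: mult_ac)
  then show "Im (qform (transpose A) x) = 0 \<and> Re (qform (transpose A) x) \<ge> 0"
    using assms unfolding psd_iff_qform by simp
qed

section \<open>Transport cost\<close>

lemma UNIV_2x2: "(UNIV :: (2 \<times> 2) set) = {(1,1),(1,2),(2,1),(2,2)}"
  using exhaust_2 by auto

lemma sum_UNIV_2x2: "sum f (UNIV :: (2 \<times> 2) set) = f (1,1) + f (1,2) + f (2,1) + f (2,2)"
  unfolding UNIV_2x2 by (simp add: add.assoc)

lemma trace_2: "trace (A :: op2) = A$1$1 + A$2$2"
  by (simp add: trace_def sum_2)

lemma Cz_entry: "Cz $ p $ q = (if p = q \<and> fst p \<noteq> snd p then 4 else 0)"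
  using exhaust_2[of "fst p"] exhaust_2[of "snd p"] exhaust_2[of "fst q"] exhaust_2[of "snd q"]
  by (auto simp: Cz_def kron_def matrix_matrix_mult_def sum_UNIV_2x2 sigma3_def mat_def
      transpose_def prod_eq_iff)

definition transport_cost :: "op4 \<Rightarrow> real" where
  "transport_cost P = Re (trace (P ** Cz))"

definition costs :: "op2 \<Rightarrow> op2 \<Rightarrow> real set" where
  "costs \<rho> \<omega> = transport_cost ` couplings \<rho> \<omega>"

lemma Dz_eq_sqrt_Inf_costs: "Dz \<rho> \<omega> = sqrt (Inf (costs \<rho> \<omega>))"
  unfolding Dz_def costs_def transport_cost_def by (simp add: setcompr_eq_image)

lemma transport_cost_eq: "transport_cost P = 4 * (Re (P$(1,2)$(1,2)) + Re (P$(2,1)$(2,1)))"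
proof -
  have "(\<Sum>r\<in>UNIV. P$p$r * Cz$r$p) = P$p$p * (if fst p \<noteq> snd p then 4 else 0)" for p
    by (subst sum_UNIV_eq_single[where i=p]) (auto simp: Cz_entry)
  then show ?thesis
    by (simp add: transport_cost_def trace_def matrix_matrix_mult_def sum_UNIV_2x2)
qed

lemma coupling_marginals:
  assumes "P \<in> couplings \<rho> \<omega>"
  shows "psd P"
    "\<omega>$1$1 = P$(1,1)$(1,1) + P$(1,2)$(1,2)" "\<omega>$2$2 = P$(2,1)$(2,1) + P$(2,2)$(2,2)"
    "\<omega>$1$2 = P$(1,1)$(2,1) + P$(1,2)$(2,2)"
    "\<rho>$1$1 = P$(1,1)$(1,1) + P$(2,1)$(2,1)" "\<rho>$2$2 = P$(1,2)$(1,2) + P$(2,2)$(2,2)"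
proof -
  have P: "is_state P" "ptrace2 P = \<omega>" "ptrace1 P = transpose \<rho>"
    using assms by (auto simp: couplings_def)
  then show "psd P" by (simp add: is_state_def)
  have "\<omega>$i$j = (\<Sum>k\<in>UNIV. P $ (i,k) $ (j,k))" for i j
    using P(2) by (auto simp: ptrace2_def)
  then show "\<omega>$1$1 = P$(1,1)$(1,1) + P$(1,2)$(1,2)" "\<omega>$2$2 = P$(2,1)$(2,1) + P$(2,2)$(2,2)"
    "\<omega>$1$2 = P$(1,1)$(2,1) + P$(1,2)$(2,2)" by (simp_all add: sum_2)
  have "\<rho>$l$k = (\<Sum>i\<in>UNIV. P $ (i,k) $ (i,l))" for k l
    using arg_cong[OF P(3), of "\<lambda>M. M$k$l"] by (simp add: ptrace1_def transpose_def)
  then show "\<rho>$1$1 = P$(1,1)$(1,1) + P$(2,1)$(2,1)" "\<rho>$2$2 = P$(1,2)$(1,2) + P$(2,2)$(2,2)"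
    by (simp_all add: sum_2)
qed

lemma transport_cost_nonneg: "P \<in> couplings \<rho> \<omega> \<Longrightarrow> transport_cost P \<ge> 0"
  using psd_diag(2)[OF coupling_marginals(1)] by (simp add: transport_cost_eq)

lemma bdd_below_costs: "bdd_below (costs \<rho> \<omega>)"
  unfolding costs_def by (rule bdd_belowI2[of _ 0]) (rule transport_cost_nonneg)

section \<open>Qubit states\<close>

definition qubit :: "real \<Rightarrow> complex \<Rightarrow> op2" where
  "qubit c w = (\<chi> i j. if i = 1 then (if j = 1 then of_real c else w)
                       else (if j = 1 then cnj w else of_real (1 - c)))"

lemma qubit_entries [simp]:
  "qubit c w $ 1 $ 1 = of_real c" "qubit c w $ 1 $ 2 = w"
  "qubit c w $ 2 $ 1 = cnj w" "qubit c w $ 2 $ 2 = of_real (1 - c)"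
  by (simp_all add: qubit_def)

lemma state_eq_qubit:
  assumes "is_state \<rho>" shows "\<rho> = qubit (Re (\<rho>$1$1)) (\<rho>$1$2)"
proof -
  have psd: "psd \<rho>" and "\<rho>$1$1 + \<rho>$2$2 = 1"
    using assms by (auto simp: is_state_def trace_2)
  moreover have "Im (\<rho>$1$1) = 0" "Im (\<rho>$2$2) = 0" "\<rho>$2$1 = cnj (\<rho>$1$2)"
    using psd_diag(1)[OF psd] psd_hermitian[OF psd, of 2 1] by auto
  ultimately show ?thesis
    unfolding vec_eq_iff forall_2 by (auto simp: complex_eq_iff)
qed

lemma state_Re_22:
  fixes \<rho> :: op2
  assumes "is_state \<rho>" shows "Re (\<rho>$2$2) = 1 - Re (\<rho>$1$1)"
  by (subst state_eq_qubit[OF assms]) simp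

lemma state_bounds:
  fixes \<rho> :: op2
  assumes "is_state \<rho>"
  shows "0 \<le> Re (\<rho>$1$1)" "Re (\<rho>$1$1) \<le> 1"
    "(cmod (\<rho>$1$2))^2 \<le> Re (\<rho>$1$1) * (1 - Re (\<rho>$1$1))"
proof -
  have "psd \<rho>" using assms by (simp add: is_state_def)
  moreover have "Re (\<rho>$2$2) = 1 - Re (\<rho>$1$1)" by (rule state_Re_22[OF assms])
  ultimately show "0 \<le> Re (\<rho>$1$1)" "Re (\<rho>$1$1) \<le> 1"
    "(cmod (\<rho>$1$2))^2 \<le> Re (\<rho>$1$1) * (1 - Re (\<rho>$1$1))"
    using psd_diag(2)[of \<rho> 1] psd_diag(2)[of \<rho> 2] psd_offdiag_bound[of \<rho> 1 2] by auto
qed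

lemma bloch_qubit:
  "bloch (qubit c w) $ 3 = 2*c - 1"
  "(norm (bloch (qubit c w)))^2 = 4 * (cmod w)^2 + (2*c - 1)^2"
proof -
  have "(norm (x :: real^3))^2 = (x$1)^2 + (x$2)^2 + (x$3)^2" for x
    by (simp add: norm_vec_def L2_set_def sum_3)
  moreover have "cmod w * cmod w = Re w * Re w + Im w * Im w"
    using cmod_power2[of w] by (simp add: power2_eq_square)
  ultimately show "bloch (qubit c w) $ 3 = 2*c - 1"
    "(norm (bloch (qubit c w)))^2 = 4 * (cmod w)^2 + (2*c - 1)^2"
    by (simp_all add: bloch_def trace_2 sigma1_def sigma2_def sigma3_def matrix_matrix_mult_def
        sum_2 cmod_power2 power2_eq_square algebra_simps)
qed

lemma qform_qubit_diag:
  "qform (qubit c 0) x = of_real (c * (cmod (x$1))^2 + (1 - c) * (cmod (x$2))^2)"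
proof -
  have norm: "cnj z * of_real r * z = of_real (r * (cmod z)^2)" for z r
    using complex_norm_square[of z] by (simp add: mult_ac)
  have "qform (qubit c 0) x = cnj (x$1) * of_real c * x$1 + cnj (x$2) * of_real (1 - c) * x$2"
    by (simp add: qform_def sum_2 del: of_real_diff)
  then show ?thesis unfolding norm of_real_add .
qed

lemma is_state_qubit_diag:
  assumes "0 \<le> c" "c \<le> 1" shows "is_state (qubit c 0)"
  using assms by (simp add: is_state_def psd_iff_qform qform_qubit_diag trace_2)

lemma psd_kron_qubit_diag:
  assumes "0 \<le> a" "a \<le> 1" "psd B"
  shows "psd (kron (qubit a 0) B)"
  unfolding psd_iff_qform
proof
  fix x :: "complex^(2\<times>2)"
  have "qform (kron (qubit a 0) B) x =
      of_real a * qform B (\<chi> k. x$(1,k)) + of_real (1 - a) * qform B (\<chi> k. x$(2,k))"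
    by (simp add: qform_def kron_def sum_UNIV_2x2 sum_2 algebra_simps)
  then show "Im (qform (kron (qubit a 0) B) x) = 0 \<and> Re (qform (kron (qubit a 0) B) x) \<ge> 0"
    using assms \<open>psd B\<close> unfolding psd_iff_qform by simp
qed

lemma kron_in_couplings:
  assumes "is_state \<rho>" "is_state \<omega>" "psd (kron \<omega> (transpose \<rho>))"
  shows "kron \<omega> (transpose \<rho>) \<in> couplings \<rho> \<omega>"
proof -
  have tr: "\<rho>$2$2 = 1 - \<rho>$1$1" "\<omega>$2$2 = 1 - \<omega>$1$1"
    using assms by (auto simp: is_state_def trace_2 algebra_simps)
  have "trace (kron \<omega> (transpose \<rho>)) = 1" "ptrace2 (kron \<omega> (transpose \<rho>)) = \<omega>"
    "ptrace1 (kron \<omega> (transpose \<rho>)) = transpose \<rho>"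
    by (simp_all add: kron_def trace_def sum_UNIV_2x2 ptrace1_def ptrace2_def vec_eq_iff forall_2
        sum_2 transpose_def tr ring_distribs)
  with assms(3) show ?thesis by (simp add: couplings_def is_state_def)
qed

lemma transport_cost_kron:
  "transport_cost (kron \<omega> (transpose \<rho>)) = 4 * Re (\<omega>$1$1 * \<rho>$2$2 + \<omega>$2$2 * \<rho>$1$1)"
  by (simp add: transport_cost_eq kron_def transpose_def)

section \<open>Symmetries of the cost\<close>

definition conj_phase :: "('n \<Rightarrow> complex) \<Rightarrow> complex^'n^'n \<Rightarrow> complex^'n^'n" where
  "conj_phase u A = (\<chi> i j. u i * A$i$j * cnj (u j))"

text \<open>Conjugating a coupling of rho and omega by V (x) conj U, where U = diag u and V = diag v,
  gives a coupling of U rho U* and V omega V*; the second factor acts on the dual space.\<close>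

definition phase_coupling :: "(2 \<Rightarrow> complex) \<Rightarrow> (2 \<Rightarrow> complex) \<Rightarrow> 2 \<times> 2 \<Rightarrow> complex" where
  "phase_coupling u v p = v (fst p) * cnj (u (snd p))"

lemma unit_cnj_mult: "cmod z = 1 \<Longrightarrow> cnj z * z = 1"
  using complex_norm_square[of z] by (simp add: mult.commute)

lemma norm_phase_coupling:
  "(\<And>i. cmod (u i) = 1) \<Longrightarrow> (\<And>i. cmod (v i) = 1) \<Longrightarrow> cmod (phase_coupling u v p) = 1"
  by (simp add: phase_coupling_def norm_mult)

lemma psd_conj_phase:
  assumes "psd A" shows "psd (conj_phase u A)"
  unfolding psd_iff_qform
proof
  fix x
  have "qform (conj_phase u A) x = qform A (\<chi> i. cnj (u i) * x$i)"
    by (simp add: qform_def conj_phase_def mult_ac)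
  then show "Im (qform (conj_phase u A) x) = 0 \<and> Re (qform (conj_phase u A) x) \<ge> 0"
    using assms unfolding psd_iff_qform by simp
qed

lemma conj_phase_diag: "(\<And>i. cmod (u i) = 1) \<Longrightarrow> conj_phase u A $ i $ i = A $ i $ i"
  using unit_cnj_mult[of "u i"] by (simp add: conj_phase_def mult_ac)

lemma conj_phase_inverse:
  assumes "\<And>i. cmod (u i) = 1" shows "conj_phase (\<lambda>i. cnj (u i)) (conj_phase u A) = A"
proof -
  have "cnj (u i) * (u i * A$i$j * cnj (u j)) * u j = (cnj (u i) * u i) * A$i$j * (cnj (u j) * u j)"
    for i j by (simp add: mult_ac)
  then show ?thesis using unit_cnj_mult[OF assms] by (simp add: vec_eq_iff conj_phase_def)
qed

lemma conj_phase_in_couplings: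
  assumes u: "\<And>i. cmod (u i) = 1" and v: "\<And>i. cmod (v i) = 1"
    and P: "P \<in> couplings \<rho> \<omega>"
  shows "conj_phase (phase_coupling u v) P \<in> couplings (conj_phase u \<rho>) (conj_phase v \<omega>)"
proof -
  let ?Q = "conj_phase (phase_coupling u v) P"
  have uu: "cnj (u i) * u i = 1" and vv: "cnj (v i) * v i = 1" for i
    using unit_cnj_mult u v by auto
  have "trace ?Q = trace P"
    using conj_phase_diag[of "phase_coupling u v", OF norm_phase_coupling[OF u v]] by (simp add: trace_def)
  moreover have "ptrace2 ?Q = conj_phase v \<omega>"
  proof -
    have "?Q $ (i,k) $ (j,k) = v i * cnj (v j) * ((cnj (u k) * u k) * P $ (i,k) $ (j,k))" for i j k
      by (simp add: conj_phase_def phase_coupling_def mult_ac)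
    then have "?Q $ (i,k) $ (j,k) = v i * cnj (v j) * P $ (i,k) $ (j,k)" for i j k
      by (simp add: uu)
    then have "ptrace2 ?Q $ i $ j = v i * ptrace2 P $ i $ j * cnj (v j)" for i j
      by (simp add: ptrace2_def sum_distrib_left sum_distrib_right mult_ac)
    with P show ?thesis by (simp add: couplings_def vec_eq_iff conj_phase_def)
  qed
  moreover have "ptrace1 ?Q = transpose (conj_phase u \<rho>)"
  proof -
    have "?Q $ (i,k) $ (i,l) = cnj (u k) * u l * ((cnj (v i) * v i) * P $ (i,k) $ (i,l))" for i k l
      by (simp add: conj_phase_def phase_coupling_def mult_ac)
    then have "?Q $ (i,k) $ (i,l) = cnj (u k) * u l * P $ (i,k) $ (i,l)" for i k l
      by (simp add: vv)
    then have "ptrace1 ?Q $ k $ l = cnj (u k) * ptrace1 P $ k $ l * u l" for k l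
      by (simp add: ptrace1_def sum_distrib_left sum_distrib_right mult_ac)
    with P show ?thesis by (simp add: couplings_def vec_eq_iff conj_phase_def transpose_def mult_ac)
  qed
  moreover have "is_state P" using P by (simp add: couplings_def)
  then have "psd ?Q" "trace P = 1" by (simp_all add: is_state_def psd_conj_phase)
  ultimately show ?thesis by (simp add: couplings_def is_state_def)
qed

lemma transport_cost_conj_phase:
  assumes "\<And>i. cmod (u i) = 1" "\<And>i. cmod (v i) = 1"
  shows "transport_cost (conj_phase (phase_coupling u v) P) = transport_cost P"
  using conj_phase_diag[of "phase_coupling u v", OF norm_phase_coupling[OF assms]] by (simp add: transport_cost_eq)

lemma costs_conj_phase:
  assumes u: "\<And>i. cmod (u i) = 1" and v: "\<And>i. cmod (v i) = 1"
  shows "costs (conj_phase u \<rho>) (conj_phase v \<omega>) = costs \<rho> \<omega>"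
proof -
  have sub: "costs \<rho>' \<omega>' \<subseteq> costs (conj_phase u' \<rho>') (conj_phase v' \<omega>')"
    if "\<And>i. cmod (u' i) = 1" "\<And>i. cmod (v' i) = 1" for u' v' \<rho>' \<omega>'
  proof
    fix c assume "c \<in> costs \<rho>' \<omega>'"
    then obtain P where P: "P \<in> couplings \<rho>' \<omega>'" and c: "c = transport_cost P"
      by (auto simp: costs_def)
    show "c \<in> costs (conj_phase u' \<rho>') (conj_phase v' \<omega>')"
      unfolding costs_def c transport_cost_conj_phase[of u' v' P, OF that, symmetric]
      using conj_phase_in_couplings[of u' v' P, OF that P] by (rule imageI)
  qed
  have "costs (conj_phase u \<rho>) (conj_phase v \<omega>)
      \<subseteq> costs (conj_phase (\<lambda>i. cnj (u i)) (conj_phase u \<rho>))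
          (conj_phase (\<lambda>i. cnj (v i)) (conj_phase v \<omega>))"
    using u v by (intro sub) simp_all
  with sub[of u v, OF u v] show ?thesis
    unfolding conj_phase_inverse[OF u] conj_phase_inverse[OF v] by blast
qed

text \<open>The second symmetry is conjugation by sigma_1, i.e. swapping the basis vectors, which maps
  sigma_z to -sigma_z and hence fixes C_z.\<close>

definition permute :: "('n \<Rightarrow> 'n) \<Rightarrow> complex^'n^'n \<Rightarrow> complex^'n^'n" where
  "permute s A = (\<chi> i j. A $ s i $ s j)"

lemma sum_UNIV_involution:
  fixes f :: "'n::finite \<Rightarrow> 'b::comm_monoid_add"
  assumes "\<And>i. s (s i) = i" shows "(\<Sum>i\<in>UNIV. f (s i)) = sum f UNIV"
  by (rule sum.reindex_bij_witness[of _ s s]) (simp_all add: assms)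

lemma psd_permute:
  assumes s: "\<And>i. s (s i) = i" and "psd A" shows "psd (permute s A)"
  unfolding psd_iff_qform
proof
  fix x
  have "(\<Sum>j\<in>UNIV. cnj (x$i) * A $ s i $ s j * x$j) = (\<Sum>j\<in>UNIV. cnj (x$i) * A $ s i $ j * x $ s j)"
    for i by (subst sum_UNIV_involution[OF s, symmetric]) (simp add: s)
  then have "qform (permute s A) x = (\<Sum>i\<in>UNIV. \<Sum>j\<in>UNIV. cnj (x$i) * A $ s i $ j * x $ s j)"
    by (simp add: qform_def permute_def)
  also have "\<dots> = (\<Sum>i\<in>UNIV. \<Sum>j\<in>UNIV. cnj (x $ s i) * A $ s (s i) $ j * x $ s j)"
    by (rule sum_UNIV_involution[OF s, symmetric])
  also have "\<dots> = qform A (\<chi> i. x $ s i)" by (simp add: qform_def s)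
  finally show "Im (qform (permute s A) x) = 0 \<and> Re (qform (permute s A) x) \<ge> 0"
    using \<open>psd A\<close> unfolding psd_iff_qform by simp
qed

lemma permute_permute: "(\<And>i. s (s i) = i) \<Longrightarrow> permute s (permute s A) = A"
  by (simp add: permute_def vec_eq_iff)

definition swap2 :: "2 \<Rightarrow> 2" where
  "swap2 i = (if i = 1 then 2 else 1)"

lemma swap2_simps [simp]: "swap2 1 = 2" "swap2 2 = 1" "swap2 (swap2 i) = i"
  using exhaust_2[of i] by (auto simp: swap2_def)

lemma permute_qubit: "permute swap2 (qubit c w) = qubit (1 - c) (cnj w)"
  by (simp add: permute_def vec_eq_iff forall_2)

lemma permute_in_couplings:
  assumes P: "P \<in> couplings \<rho> \<omega>"
  shows "permute (map_prod swap2 swap2) P \<in> couplings (permute swap2 \<rho>) (permute swap2 \<omega>)"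
proof -
  let ?Q = "permute (map_prod swap2 swap2) P"
  have "is_state P" "ptrace2 P = \<omega>" "ptrace1 P = transpose \<rho>"
    using P by (simp_all add: couplings_def)
  moreover have "psd P \<Longrightarrow> psd ?Q" by (rule psd_permute) (simp_all add: map_prod_def split: prod.splits)
  moreover have "trace ?Q = trace P"
    by (simp add: trace_def sum_UNIV_2x2 permute_def add_ac)
  moreover have "ptrace2 ?Q = permute swap2 (ptrace2 P)" "ptrace1 ?Q = permute swap2 (ptrace1 P)"
    by (simp_all add: ptrace1_def ptrace2_def permute_def vec_eq_iff forall_2 sum_2 add_ac)
  moreover have "permute swap2 (transpose \<rho>) = transpose (permute swap2 \<rho>)"
    by (simp add: permute_def transpose_def vec_eq_iff)
  ultimately show ?thesis by (simp add: couplings_def is_state_def)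
qed

lemma transport_cost_permute: "transport_cost (permute (map_prod swap2 swap2) P) = transport_cost P"
  by (simp add: transport_cost_eq permute_def)

lemma costs_permute: "costs (permute swap2 \<rho>) (permute swap2 \<omega>) = costs \<rho> \<omega>"
proof -
  have sub: "costs \<rho>' \<omega>' \<subseteq> costs (permute swap2 \<rho>') (permute swap2 \<omega>')" for \<rho>' \<omega>'
    unfolding costs_def
    by (metis image_subsetI imageI permute_in_couplings transport_cost_permute)
  show ?thesis
    using sub[of \<rho> \<omega>] sub[of "permute swap2 \<rho>" "permute swap2 \<omega>"]
    by (simp add: permute_permute)
qed

lemma is_state_permute_swap2: "is_state \<rho> \<Longrightarrow> is_state (permute swap2 \<rho>)"
  unfolding is_state_def by (simp add: psd_permute) (simp add: trace_2 permute_def add.commute)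

section \<open>Distances to the basis states\<close>

lemma kron_qubit_diag_in_couplings:
  assumes "0 \<le> a" "a \<le> 1" "is_state \<rho>"
  shows "kron (qubit a 0) (transpose \<rho>) \<in> couplings \<rho> (qubit a 0)"
  using assms
  by (intro kron_in_couplings psd_kron_qubit_diag psd_transpose is_state_qubit_diag)
    (simp_all add: is_state_def)

lemma Inf_costs_ground:
  assumes "is_state \<rho>" shows "Inf (costs \<rho> (qubit 1 0)) = 4 * (1 - Re (\<rho>$1$1))"
proof -
  have "transport_cost P = 4 * (1 - Re (\<rho>$1$1))" if P: "P \<in> couplings \<rho> (qubit 1 0)" for P
  proof -
    note marg = coupling_marginals[OF P]
    have "Re (P$(2,1)$(2,1)) + Re (P$(2,2)$(2,2)) = 0" using arg_cong[OF marg(3), of Re] by simp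
    then have "Re (P$(2,1)$(2,1)) = 0" "Re (P$(2,2)$(2,2)) = 0"
      using psd_diag(2)[OF marg(1), of "(2,1)"] psd_diag(2)[OF marg(1), of "(2,2)"] by linarith+
    then show ?thesis
      using arg_cong[OF marg(6), of Re] state_Re_22[OF assms] by (simp add: transport_cost_eq)
  qed
  moreover have "couplings \<rho> (qubit 1 0) \<noteq> {}"
    using kron_qubit_diag_in_couplings[of 1, OF _ _ assms] by auto
  ultimately have "costs \<rho> (qubit 1 0) = {4 * (1 - Re (\<rho>$1$1))}"
    unfolding costs_def by auto
  then show ?thesis by simp
qed

lemma Inf_costs_excited:
  assumes "is_state \<rho>" shows "Inf (costs \<rho> (qubit 0 0)) = 4 * Re (\<rho>$1$1)"
proof -
  have "costs \<rho> (qubit 0 0) = costs (permute swap2 \<rho>) (qubit 1 0)"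
    using costs_permute[of \<rho> "qubit 0 0"] by (simp add: permute_qubit)
  then show ?thesis
    using Inf_costs_ground[OF is_state_permute_swap2[OF assms]] state_Re_22[OF assms]
    by (simp add: permute_def)
qed

lemma Inf_costs_qubit_diag_le:
  assumes "0 \<le> a" "a \<le> 1" "0 \<le> b" "b \<le> 1"
  shows "Inf (costs (qubit b 0) (qubit a 0)) \<le> 4 * (a * (1 - b) + (1 - a) * b)"
proof (rule cInf_lower[OF _ bdd_below_costs])
  have "kron (qubit a 0) (transpose (qubit b 0)) \<in> couplings (qubit b 0) (qubit a 0)"
    using assms by (intro kron_qubit_diag_in_couplings is_state_qubit_diag)
  then show "4 * (a * (1 - b) + (1 - a) * b) \<in> costs (qubit b 0) (qubit a 0)"
    unfolding costs_def by (rule image_eqI[rotated]) (simp add: transport_cost_kron)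
qed

section \<open>Distance of a state to itself\<close>

text \<open>The identity behind this bound is (a^2 + p)(b^2 + p) - p(a + b)^2 = (ab - p)^2.\<close>

lemma coherence_transport_bound:
  fixes a b p m :: real
  assumes "0 \<le> p" "a^2 + b^2 + 2*p = 1" "m \<le> p * (a + b)^2"
  shows "m \<le> p * (1 + 2 * sqrt ((a^2 + p) * (b^2 + p) - m))"
proof -
  have "(a*b - p)^2 \<le> (a^2 + p) * (b^2 + p) - m"
    using assms(3) by (simp add: power2_eq_square algebra_simps)
  then have "a*b - p \<le> sqrt ((a^2 + p) * (b^2 + p) - m)" by (rule real_le_rsqrt)
  moreover have "(a + b)^2 = 1 + 2 * (a*b - p)"
    using assms(2) by (simp add: power2_eq_square algebra_simps)
  ultimately have "p * (a + b)^2 \<le> p * (1 + 2 * sqrt ((a^2 + p) * (b^2 + p) - m))"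
    using assms(1) by (simp add: mult_left_mono)
  with assms(3) show ?thesis by linarith
qed

text \<open>The cost is 8p with p = P_(12,12) = P_(21,21), and Cauchy-Schwarz applied to
  rho_12 = P_(11,21) + P_(12,22) gives |rho_12| <= sqrt p (sqrt P_(11,11) + sqrt P_(22,22)).\<close>

lemma transport_cost_self_ge:
  fixes \<rho> :: op2
  assumes "is_state \<rho>" and P: "P \<in> couplings \<rho> \<rho>"
  defines "c \<equiv> Re (\<rho>$1$1)" and "m \<equiv> (cmod (\<rho>$1$2))^2"
  shows "8 * m / (1 + 2 * sqrt (c * (1 - c) - m)) \<le> transport_cost P"
proof -
  note marg = coupling_marginals[OF P]
  define x where "x p = Re (P$p$p)" for p
  have x_nonneg: "x p \<ge> 0" for p using psd_diag(2)[OF marg(1)] by (simp add: x_def)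
  have c: "c = x (1,1) + x (1,2)" "c = x (1,1) + x (2,1)" "1 - c = x (2,2) + x (1,2)"
    using arg_cong[OF marg(2), of Re] arg_cong[OF marg(5), of Re] arg_cong[OF marg(3), of Re]
      state_Re_22[OF assms(1)]
    by (simp_all add: c_def x_def)
  have cs: "cmod (P$p$q) \<le> sqrt (x p) * sqrt (x q)" for p q
    using psd_offdiag_bound[OF marg(1), of p q] unfolding x_def
    by (metis real_le_rsqrt real_sqrt_mult)
  have "cmod (\<rho>$1$2) \<le> cmod (P$(1,1)$(2,1)) + cmod (P$(1,2)$(2,2))"
    using marg(4) norm_triangle_ineq by metis
  also have "\<dots> \<le> sqrt (x (1,2)) * (sqrt (x (1,1)) + sqrt (x (2,2)))"
    using cs[of "(1,1)" "(2,1)"] cs[of "(1,2)" "(2,2)"] c by (simp add: algebra_simps)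
  finally have "m \<le> (sqrt (x (1,2)) * (sqrt (x (1,1)) + sqrt (x (2,2))))^2"
    unfolding m_def by (intro power_mono) simp_all
  also have "\<dots> = x (1,2) * (sqrt (x (1,1)) + sqrt (x (2,2)))^2"
    using x_nonneg by (simp add: power_mult_distrib)
  finally have "m \<le> x (1,2) * (sqrt (x (1,1)) + sqrt (x (2,2)))^2" .
  moreover have sq: "(sqrt (x (1,1)))^2 + x (1,2) = c" "(sqrt (x (2,2)))^2 + x (1,2) = 1 - c"
    using c x_nonneg by simp_all
  moreover have "(sqrt (x (1,1)))^2 + (sqrt (x (2,2)))^2 + 2 * x (1,2) = 1"
    using sq by simp
  ultimately have "m \<le> x (1,2) * (1 + 2 * sqrt (c * (1 - c) - m))"
    using coherence_transport_bound[OF x_nonneg] by metis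
  moreover have "transport_cost P = 8 * x (1,2)"
    using c by (simp add: transport_cost_eq x_def)
  moreover have "0 \<le> sqrt (c * (1 - c) - m)"
    using state_bounds(3)[OF assms(1)] by (simp add: c_def m_def)
  then have "0 < 1 + 2 * sqrt (c * (1 - c) - m)" by linarith
  ultimately show ?thesis by (simp add: divide_le_eq)
qed

text \<open>The rank-one coupling attaining the bound above, with d = sqrt (det rho).\<close>

definition self_coupling_vector :: "real \<Rightarrow> complex \<Rightarrow> real \<Rightarrow> 2 \<times> 2 \<Rightarrow> complex" where
  "self_coupling_vector c w d p =
    (if fst p = 1 then (if snd p = 1 then of_real (c + d) else w)
     else (if snd p = 1 then cnj w else of_real (1 - c + d)))"

definition optimal_self_coupling :: "real \<Rightarrow> complex \<Rightarrow> real \<Rightarrow> op4" where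
  "optimal_self_coupling c w d =
    (\<chi> p q. of_real (1 / (1 + 2*d)) *
      (self_coupling_vector c w d p * cnj (self_coupling_vector c w d q)))"

lemma optimal_self_coupling_in_couplings:
  assumes "0 \<le> d" "d^2 = c * (1 - c) - (cmod w)^2"
  shows "optimal_self_coupling c w d \<in> couplings (qubit c w) (qubit c w)"
proof -
  define k where "k = 1 / (1 + 2*d)"
  define m where "m = (cmod w)^2"
  have k: "k * (1 + 2*d) = 1" using assms(1) by (simp add: k_def)
  have ww: "w * cnj w = of_real m" "cnj w * w = of_real m"
    using complex_norm_square[of w] by (simp_all add: m_def mult.commute)
  have dd: "d * d = c * (1 - c) - m" using assms(2) by (simp add: m_def power2_eq_square)
  have r: "k * ((c + d) * (c + d)) + k * m = c" "k * m + k * ((1 - c + d) * (1 - c + d)) = 1 - c"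
    "k * (c + d) + k * (1 - c + d) = 1"
    using dd k by algebra+
  have r3: "of_real k * (of_real (c + d) * z) + of_real k * (z * of_real (1 - c + d)) = z"
    "of_real k * (z * of_real (c + d)) + of_real k * (of_real (1 - c + d) * z) = z" for z :: complex
    using arg_cong[OF r(3), of "\<lambda>t. of_real t * z"] by (simp_all add: algebra_simps)
  let ?P = "optimal_self_coupling c w d"
  have P: "?P $ p $ q =
      of_real k * (self_coupling_vector c w d p * cnj (self_coupling_vector c w d q))" for p q
    by (simp add: optimal_self_coupling_def k_def)
  have "psd ?P"
    unfolding optimal_self_coupling_def by (rule psd_rank_one) (use assms(1) in simp)
  moreover have "trace ?P = 1"
    using r(1,2)
    by (simp add: trace_def sum_UNIV_2x2 P self_coupling_vector_def ww flip: of_real_mult of_real_add)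
  moreover have "ptrace2 ?P = qubit c w"
    using r r3
    by (simp add: ptrace2_def vec_eq_iff forall_2 sum_2 P self_coupling_vector_def ww
        flip: of_real_mult of_real_add)
  moreover have "ptrace1 ?P = transpose (qubit c w)"
    using r r3
    by (simp add: ptrace1_def vec_eq_iff forall_2 sum_2 P self_coupling_vector_def ww transpose_def
        flip: of_real_mult of_real_add)
  ultimately show ?thesis by (simp add: couplings_def is_state_def)
qed

lemma transport_cost_optimal_self_coupling:
  "transport_cost (optimal_self_coupling c w d) = 8 * (cmod w)^2 / (1 + 2*d)"
proof -
  have "w * cnj w = of_real ((cmod w)^2)" "cnj w * w = of_real ((cmod w)^2)"
    using complex_norm_square[of w] by (simp_all add: mult.commute)
  then show ?thesis
    by (simp add: transport_cost_eq optimal_self_coupling_def self_coupling_vector_def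
        flip: of_real_mult)
qed

lemma Inf_costs_self:
  fixes \<rho> :: op2
  assumes "is_state \<rho>"
  defines "c \<equiv> Re (\<rho>$1$1)" and "m \<equiv> (cmod (\<rho>$1$2))^2"
  shows "Inf (costs \<rho> \<rho>) = 8 * m / (1 + 2 * sqrt (c * (1 - c) - m))"
proof (rule cInf_eq_minimum)
  define d where "d = sqrt (c * (1 - c) - m)"
  have "0 \<le> c * (1 - c) - m" using state_bounds(3)[OF assms(1)] by (simp add: c_def m_def)
  then have "0 \<le> d" "d^2 = c * (1 - c) - (cmod (\<rho>$1$2))^2" by (simp_all add: d_def m_def)
  then have "optimal_self_coupling c (\<rho>$1$2) d \<in> couplings \<rho> \<rho>"
    using optimal_self_coupling_in_couplings state_eq_qubit[OF assms(1)] by (metis c_def)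
  then show "8 * m / (1 + 2 * sqrt (c * (1 - c) - m)) \<in> costs \<rho> \<rho>"
    unfolding costs_def
    by (rule image_eqI[rotated]) (simp add: transport_cost_optimal_self_coupling d_def m_def)
  show "8 * m / (1 + 2 * sqrt (c * (1 - c) - m)) \<le> x" if "x \<in> costs \<rho> \<rho>" for x
    using that transport_cost_self_ge[OF assms(1)] by (auto simp: costs_def c_def m_def)
qed

lemma self_cost_strict_mono:
  fixes K :: real
  shows "strict_mono_on {0..K} (\<lambda>m. 8 * m / (1 + 2 * sqrt (K - m)))"
proof (rule strict_mono_onI)
  fix m1 m2 assume "m1 \<in> {0..K}" "m2 \<in> {0..K}" "m1 < m2"
  then have "0 \<le> m1" "sqrt (K - m2) \<le> sqrt (K - m1)" "0 \<le> sqrt (K - m2)" by auto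
  then have "0 < 1 + 2 * sqrt (K - m2)" "0 < 1 + 2 * sqrt (K - m1)" by linarith+
  with \<open>0 \<le> m1\<close> \<open>sqrt (K - m2) \<le> sqrt (K - m1)\<close>
  have "8 * m1 / (1 + 2 * sqrt (K - m1)) \<le> 8 * m1 / (1 + 2 * sqrt (K - m2))"
    by (intro divide_left_mono) simp_all
  also have "\<dots> < 8 * m2 / (1 + 2 * sqrt (K - m2))"
    using \<open>m1 < m2\<close> \<open>0 < 1 + 2 * sqrt (K - m2)\<close> by (intro divide_strict_right_mono) auto
  finally show "8 * m1 / (1 + 2 * sqrt (K - m1)) < 8 * m2 / (1 + 2 * sqrt (K - m2))" .
qed

section \<open>Isometries\<close>

lemma mixture_ge_one_imp_endpoint:
  fixes a b :: real
  assumes "0 \<le> a" "a \<le> 1" "0 \<le> b" "b \<le> 1" "1 \<le> a * (1 - b) + (1 - a) * b"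
  shows "a = 0 \<or> a = 1"
proof -
  have "a * b + (1 - a) * (1 - b) \<le> 0" using assms(5) by (simp add: algebra_simps)
  moreover have "0 \<le> a * b" "0 \<le> (1 - a) * (1 - b)" using assms(1-4) by simp_all
  ultimately have "a * b = 0" "(1 - a) * (1 - b) = 0" by linarith+
  then show ?thesis by auto
qed

text \<open>Diagonal states are at distance 0 from themselves, and the two basis states are the only
  pair of diagonal states at distance 2, so an isometry fixes or swaps them. The distance to
  the ground state then reads off the population.\<close>

lemma isometry_populations:
  assumes states: "\<And>\<rho>. is_state \<rho> \<Longrightarrow> is_state (\<Phi> \<rho>)"
    and iso: "\<And>\<rho> \<omega>. is_state \<rho> \<Longrightarrow> is_state \<omega> \<Longrightarrow>
      Inf (costs (\<Phi> \<rho>) (\<Phi> \<omega>)) = Inf (costs \<rho> \<omega>)"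
  shows "(\<forall>\<rho>. is_state \<rho> \<longrightarrow> Re (\<Phi> \<rho> $1$1) = Re (\<rho>$1$1)) \<or>
         (\<forall>\<rho>. is_state \<rho> \<longrightarrow> Re (\<Phi> \<rho> $1$1) = 1 - Re (\<rho>$1$1))"
proof -
  have ground: "is_state (qubit 1 0)" and excited: "is_state (qubit 0 0)"
    by (simp_all add: is_state_qubit_diag)
  have diag: "\<Phi> \<sigma> = qubit (Re (\<Phi> \<sigma> $1$1)) 0"
    if "is_state \<sigma>" "Inf (costs \<sigma> \<sigma>) = 0" for \<sigma>
  proof -
    let ?c = "Re (\<Phi> \<sigma> $1$1)" and ?m = "(cmod (\<Phi> \<sigma> $1$2))^2"
    have "0 \<le> sqrt (?c * (1 - ?c) - ?m)" using state_bounds(3)[OF states[OF that(1)]] by simp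
    moreover have "8 * ?m / (1 + 2 * sqrt (?c * (1 - ?c) - ?m)) = 0"
      using Inf_costs_self[OF states[OF that(1)]] iso[OF that(1) that(1)] that(2) by simp
    ultimately have "\<Phi> \<sigma> $1$2 = 0" by (simp add: add_nonneg_eq_0_iff)
    then show ?thesis using state_eq_qubit[OF states[OF that(1)]] by simp
  qed
  define a where "a = Re (\<Phi> (qubit 1 0) $1$1)"
  define b where "b = Re (\<Phi> (qubit 0 0) $1$1)"
  have a: "\<Phi> (qubit 1 0) = qubit a 0" "0 \<le> a" "a \<le> 1"
    using diag[OF ground] Inf_costs_ground[OF ground] state_bounds[OF states[OF ground]]
    by (simp_all add: a_def)
  have b: "\<Phi> (qubit 0 0) = qubit b 0" "0 \<le> b" "b \<le> 1"
    using diag[OF excited] Inf_costs_excited[OF excited] state_bounds[OF states[OF excited]]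
    by (simp_all add: b_def)
  have "4 = Inf (costs (qubit b 0) (qubit a 0))"
    using iso[OF excited ground] Inf_costs_ground[OF excited] a(1) b(1) by simp
  also have "\<dots> \<le> 4 * (a * (1 - b) + (1 - a) * b)"
    using a b by (intro Inf_costs_qubit_diag_le)
  finally have "a = 0 \<or> a = 1"
    using a b by (intro mixture_ge_one_imp_endpoint[where b = b]) simp_all
  then show ?thesis
  proof
    assume "a = 1"
    then have "Re (\<Phi> \<rho> $1$1) = Re (\<rho>$1$1)" if "is_state \<rho>" for \<rho>
      using iso[OF that ground] a(1) Inf_costs_ground[OF that] Inf_costs_ground[OF states[OF that]]
      by simp
    then show ?thesis by blast
  next
    assume "a = 0"
    then have "Re (\<Phi> \<rho> $1$1) = 1 - Re (\<rho>$1$1)" if "is_state \<rho>" for \<rho>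
      using iso[OF that ground] a(1) Inf_costs_ground[OF that] Inf_costs_excited[OF states[OF that]]
      by simp
    then show ?thesis by blast
  qed
qed

lemma isometry_coherence:
  assumes states: "\<And>\<rho>. is_state \<rho> \<Longrightarrow> is_state (\<Phi> \<rho>)"
    and iso: "\<And>\<rho> \<omega>. is_state \<rho> \<Longrightarrow> is_state \<omega> \<Longrightarrow>
      Inf (costs (\<Phi> \<rho>) (\<Phi> \<omega>)) = Inf (costs \<rho> \<omega>)"
    and pop: "Re (\<Phi> \<rho> $1$1) = Re (\<rho>$1$1) \<or> Re (\<Phi> \<rho> $1$1) = 1 - Re (\<rho>$1$1)"
    and \<rho>: "is_state \<rho>"
  shows "cmod (\<Phi> \<rho> $1$2) = cmod (\<rho>$1$2)"
proof -
  define K where "K = Re (\<rho>$1$1) * (1 - Re (\<rho>$1$1))"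
  have "Re (\<Phi> \<rho> $1$1) * (1 - Re (\<Phi> \<rho> $1$1)) = K"
    using pop by (auto simp: K_def mult.commute)
  then have "(\<lambda>m. 8 * m / (1 + 2 * sqrt (K - m))) ((cmod (\<rho>$1$2))^2) =
      (\<lambda>m. 8 * m / (1 + 2 * sqrt (K - m))) ((cmod (\<Phi> \<rho> $1$2))^2)"
    using iso[OF \<rho> \<rho>] Inf_costs_self[OF \<rho>] Inf_costs_self[OF states[OF \<rho>]] by (simp add: K_def)
  moreover have "(cmod (\<rho>$1$2))^2 \<in> {0..K}" "(cmod (\<Phi> \<rho> $1$2))^2 \<in> {0..K}"
    using state_bounds(3)[OF \<rho>] state_bounds(3)[OF states[OF \<rho>]] \<open>_ = K\<close> by (simp_all add: K_def)
  ultimately have "(cmod (\<Phi> \<rho> $1$2))^2 = (cmod (\<rho>$1$2))^2"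
    by (rule strict_mono_on_eqD[OF self_cost_strict_mono])
  then show ?thesis by (simp add: power2_eq_iff_nonneg)
qed

lemma conj_phase_qubit:
  assumes "cmod z = 1"
  shows "conj_phase (\<lambda>i. if i = 1 then z else 1) (qubit c w) = qubit c (z * w)"
  using unit_cnj_mult[OF assms] by (simp add: conj_phase_def vec_eq_iff forall_2 mult_ac)

lemma state_eq_conj_phase:
  fixes \<rho> \<rho>' :: op2
  assumes "is_state \<rho>" "is_state \<rho>'" "Re (\<rho>'$1$1) = Re (\<rho>$1$1)" "cmod (\<rho>'$1$2) = cmod (\<rho>$1$2)"
  obtains u where "\<And>i. cmod (u i) = 1" "\<rho>' = conj_phase u \<rho>"
proof -
  define z where "z = (if \<rho>$1$2 = 0 then 1 else \<rho>'$1$2 / \<rho>$1$2)"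
  have "cmod z = 1" "\<rho>'$1$2 = z * \<rho>$1$2"
    using assms(4) by (auto simp: z_def norm_divide)
  then have "\<rho>' = conj_phase (\<lambda>i. if i = 1 then z else 1) \<rho>"
    using state_eq_qubit[OF assms(1)] state_eq_qubit[OF assms(2)] assms(3)
    by (metis conj_phase_qubit)
  moreover have "cmod ((\<lambda>i. if i = 1 then z else 1) i) = 1" for i
    using \<open>cmod z = 1\<close> by simp
  ultimately show ?thesis by (rule that[rotated])
qed

lemma permute_swap2_state:
  fixes \<rho> :: op2
  assumes "is_state \<rho>"
  shows "Re (permute swap2 \<rho> $1$1) = 1 - Re (\<rho>$1$1)" "cmod (permute swap2 \<rho> $1$2) = cmod (\<rho>$1$2)"
  by (subst (1 2) state_eq_qubit[OF assms], simp add: permute_qubit)+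

definition coherence_population_invariant :: "(op2 \<Rightarrow> op2) \<Rightarrow> bool" where
  "coherence_population_invariant \<Phi> \<longleftrightarrow>
    (\<forall>\<rho>. is_state \<rho> \<longrightarrow> cmod (\<Phi> \<rho> $1$2) = cmod (\<rho>$1$2)) \<and>
    ((\<forall>\<rho>. is_state \<rho> \<longrightarrow> Re (\<Phi> \<rho> $1$1) = Re (\<rho>$1$1)) \<or>
     (\<forall>\<rho>. is_state \<rho> \<longrightarrow> Re (\<Phi> \<rho> $1$1) = 1 - Re (\<rho>$1$1)))"

lemma coherence_population_invariant_imp_isometry:
  assumes states: "\<And>\<rho>. is_state \<rho> \<Longrightarrow> is_state (\<Phi> \<rho>)"
    and "coherence_population_invariant \<Phi>"
    and \<rho>: "is_state \<rho>" and \<omega>: "is_state \<omega>"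
  shows "costs (\<Phi> \<rho>) (\<Phi> \<omega>) = costs \<rho> \<omega>"
proof -
  have coh: "\<And>\<rho>. is_state \<rho> \<Longrightarrow> cmod (\<Phi> \<rho> $1$2) = cmod (\<rho>$1$2)"
    and pop: "(\<forall>\<rho>. is_state \<rho> \<longrightarrow> Re (\<Phi> \<rho> $1$1) = Re (\<rho>$1$1)) \<or>
              (\<forall>\<rho>. is_state \<rho> \<longrightarrow> Re (\<Phi> \<rho> $1$1) = 1 - Re (\<rho>$1$1))"
    using assms(2) by (simp_all add: coherence_population_invariant_def)
  show ?thesis
  using pop
proof
  assume "\<forall>\<rho>. is_state \<rho> \<longrightarrow> Re (\<Phi> \<rho> $1$1) = Re (\<rho>$1$1)"
  then obtain u v where "\<And>i. cmod (u i) = 1" "\<Phi> \<rho> = conj_phase u \<rho>"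
    and "\<And>i. cmod (v i) = 1" "\<Phi> \<omega> = conj_phase v \<omega>"
    using state_eq_conj_phase[OF \<rho> states[OF \<rho>]] state_eq_conj_phase[OF \<omega> states[OF \<omega>]]
      coh[OF \<rho>] coh[OF \<omega>] \<rho> \<omega> by metis
  then show ?thesis by (simp add: costs_conj_phase)
next
  assume "\<forall>\<rho>. is_state \<rho> \<longrightarrow> Re (\<Phi> \<rho> $1$1) = 1 - Re (\<rho>$1$1)"
  then obtain u v where "\<And>i. cmod (u i) = 1" "\<Phi> \<rho> = conj_phase u (permute swap2 \<rho>)"
    and "\<And>i. cmod (v i) = 1" "\<Phi> \<omega> = conj_phase v (permute swap2 \<omega>)"
    using state_eq_conj_phase[OF is_state_permute_swap2[OF \<rho>] states[OF \<rho>]]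
      state_eq_conj_phase[OF is_state_permute_swap2[OF \<omega>] states[OF \<omega>]]
      permute_swap2_state[OF \<rho>] permute_swap2_state[OF \<omega>] coh[OF \<rho>] coh[OF \<omega>] \<rho> \<omega> by metis
  then show ?thesis by (simp add: costs_conj_phase costs_permute)
qed
qed

lemma bloch_state:
  fixes \<rho> :: op2
  assumes "is_state \<rho>"
  shows "bloch \<rho> $ 3 = 2 * Re (\<rho>$1$1) - 1"
    "(norm (bloch \<rho>))^2 = 4 * (cmod (\<rho>$1$2))^2 + (2 * Re (\<rho>$1$1) - 1)^2"
  by (subst state_eq_qubit[OF assms], simp add: bloch_qubit)+

lemma bloch_conditions_iff_coherence_population_invariant:
  assumes states: "\<And>\<rho>. is_state \<rho> \<Longrightarrow> is_state (\<Phi> \<rho>)"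
  shows "((\<forall>\<rho>. is_state \<rho> \<longrightarrow> norm (bloch (\<Phi> \<rho>)) = norm (bloch \<rho>)) \<and>
          ((\<forall>\<rho>. is_state \<rho> \<longrightarrow> bloch (\<Phi> \<rho>) $ 3 = bloch \<rho> $ 3) \<or>
           (\<forall>\<rho>. is_state \<rho> \<longrightarrow> bloch (\<Phi> \<rho>) $ 3 = - (bloch \<rho> $ 3)))) \<longleftrightarrow>
         coherence_population_invariant \<Phi>"
proof -
  have z: "bloch (\<Phi> \<rho>) $ 3 = bloch \<rho> $ 3 \<longleftrightarrow> Re (\<Phi> \<rho> $1$1) = Re (\<rho>$1$1)"
    "bloch (\<Phi> \<rho>) $ 3 = - (bloch \<rho> $ 3) \<longleftrightarrow> Re (\<Phi> \<rho> $1$1) = 1 - Re (\<rho>$1$1)"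
    if "is_state \<rho>" for \<rho>
    using bloch_state(1)[OF that] bloch_state(1)[OF states[OF that]] by auto
  have norm: "norm (bloch (\<Phi> \<rho>)) = norm (bloch \<rho>) \<longleftrightarrow> cmod (\<Phi> \<rho> $1$2) = cmod (\<rho>$1$2)"
    if "is_state \<rho>" "Re (\<Phi> \<rho> $1$1) = Re (\<rho>$1$1) \<or> Re (\<Phi> \<rho> $1$1) = 1 - Re (\<rho>$1$1)" for \<rho>
  proof -
    have "2 * Re (\<Phi> \<rho> $1$1) - 1 = 2 * Re (\<rho>$1$1) - 1 \<or>
        2 * Re (\<Phi> \<rho> $1$1) - 1 = - (2 * Re (\<rho>$1$1) - 1)"
      using that(2) by auto
    then have "(2 * Re (\<Phi> \<rho> $1$1) - 1)^2 = (2 * Re (\<rho>$1$1) - 1)^2"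
      by (metis power2_minus)
    then have "(norm (bloch (\<Phi> \<rho>)))^2 = (norm (bloch \<rho>))^2 \<longleftrightarrow>
        (cmod (\<Phi> \<rho> $1$2))^2 = (cmod (\<rho>$1$2))^2"
      using bloch_state(2)[OF that(1)] bloch_state(2)[OF states[OF that(1)]] by simp
    then show ?thesis by (simp add: power2_eq_iff_nonneg)
  qed
  show ?thesis unfolding coherence_population_invariant_def using z norm by (auto 0 3)
qed

theorem theorem3p1:
  fixes \<Phi> :: "op2 \<Rightarrow> op2"
  assumes "\<forall>\<rho>. is_state \<rho> \<longrightarrow> is_state (\<Phi> \<rho>)"
  shows "(\<forall>\<rho> \<omega>. is_state \<rho> \<longrightarrow> is_state \<omega> \<longrightarrow> Dz (\<Phi> \<rho>) (\<Phi> \<omega>) = Dz \<rho> \<omega>)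
     \<longleftrightarrow> ((\<forall>\<rho>. is_state \<rho> \<longrightarrow> norm (bloch (\<Phi> \<rho>)) = norm (bloch \<rho>)) \<and>
          ((\<forall>\<rho>. is_state \<rho> \<longrightarrow> bloch (\<Phi> \<rho>) $ 3 = bloch \<rho> $ 3) \<or>
           (\<forall>\<rho>. is_state \<rho> \<longrightarrow> bloch (\<Phi> \<rho>) $ 3 = - (bloch \<rho> $ 3))))"
proof -
  have states: "\<And>\<rho>. is_state \<rho> \<Longrightarrow> is_state (\<Phi> \<rho>)" using assms by blast
  have "(\<forall>\<rho> \<omega>. is_state \<rho> \<longrightarrow> is_state \<omega> \<longrightarrow> Dz (\<Phi> \<rho>) (\<Phi> \<omega>) = Dz \<rho> \<omega>) \<longleftrightarrow>
      (\<forall>\<rho> \<omega>. is_state \<rho> \<longrightarrow> is_state \<omega> \<longrightarrow> Inf (costs (\<Phi> \<rho>) (\<Phi> \<omega>)) = Inf (costs \<rho> \<omega>))"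
    by (simp add: Dz_eq_sqrt_Inf_costs)
  also have "\<dots> \<longleftrightarrow> coherence_population_invariant \<Phi>"
  proof
    assume "\<forall>\<rho> \<omega>. is_state \<rho> \<longrightarrow> is_state \<omega> \<longrightarrow> Inf (costs (\<Phi> \<rho>) (\<Phi> \<omega>)) = Inf (costs \<rho> \<omega>)"
    then have iso: "\<And>\<rho> \<omega>. is_state \<rho> \<Longrightarrow> is_state \<omega> \<Longrightarrow> Inf (costs (\<Phi> \<rho>) (\<Phi> \<omega>)) = Inf (costs \<rho> \<omega>)"
      by blast
    show "coherence_population_invariant \<Phi>"
      unfolding coherence_population_invariant_def
      using isometry_populations[OF states iso] isometry_coherence[OF states iso] by blast
  qed (simp add: coherence_population_invariant_imp_isometry[of \<Phi>, OF states])
  also have "\<dots> \<longleftrightarrow> ((\<forall>\<rho>. is_state \<rho> \<longrightarrow> norm (bloch (\<Phi> \<rho>)) = norm (bloch \<rho>)) \<and>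
          ((\<forall>\<rho>. is_state \<rho> \<longrightarrow> bloch (\<Phi> \<rho>) $ 3 = bloch \<rho> $ 3) \<or>
           (\<forall>\<rho>. is_state \<rho> \<longrightarrow> bloch (\<Phi> \<rho>) $ 3 = - (bloch \<rho> $ 3))))"
    by (rule bloch_conditions_iff_coherence_population_invariant[OF states, symmetric])
  finally show ?thesis .
qed

end
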